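(* Let $\mathcal P$ be a set of pre-tangles in a graph $G$, let $N$ be a nested set of $\mathcal P$-relevant proper separations of $G$ which efficiently distinguishes $\mathcal P$, and let $(\vec s_i)_{i\in\mathbb N}$ be a strictly increasing sequence of orientations of separations in $N$. If the orders $|s_i|$ are strictly increasing, then there is a strictly increasing sequence $(\vec s_i')_{i\in\mathbb N}$ of orientations of separations in $N$ which contains $(\vec s_i)_i$ as a subsequence and is strongly $\mathcal P$-relevant.
   Context: Notation: $s$ denotes a separation (an unordered pair $\{A,B\}$ of subsets of $V(G)$ with $A\cup B=V(G)$ and no edge between $A\setminus B$ and $B\setminus A$; order $|s|=|A\cap B|$; proper if $A\ne V(G)\ne B$), $\vec s,\overleftarrow{s}$ its two orientations; oriented separations are ordered by $(A,B)\le(C,D)$ iff $A\subseteq C$ and $B\supseteq D$. Nested: some orientations comparable. A set $O$ of oriented separations is consistent if there are no $(A,B),(C,D)\in O$ with $\{A,B\}\ne\{C,D\}$ and $(B,A)\le(C,D)$. A pre-tangle is a consistent set $P$ which, for some $k\in\mathbb N\cup\{\aleph_0\}$, contains exactly one orientation of every separation of order $<k$ and nothing else. A separation distinguishes two pre-tangles if both contain an orientation of it but different ones; efficiently if of minimum order among such. $N$ efficiently distinguishes $\mathcal P$ if any two pre-tangles in $\mathcal P$ distinguished by some separation are efficiently distinguished by an element of $N$. A separation is $\mathcal P$-relevant if it efficiently distinguishes some two pre-tangles in $\mathcal P$. A pair $\vec s<\vec t$ is strongly $\mathcal P$-relevant if there are $O,P,Q\in\mathcal P$ such that $s$ efficiently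 distinguishes $O$ and $P$ with $\vec s\in P$, and $t$ efficiently distinguishes $P$ and $Q$ with $\overleftarrow{t}\in P$; a strictly increasing sequence is strongly $\mathcal P$-relevant if all consecutive pairs are. *)

theory Defs
  imports Main "HOL-Library.Extended_Nat"
begin

definition graph :: "'a set \<Rightarrow> ('a \<Rightarrow> 'a \<Rightarrow> bool) \<Rightarrow> bool" where
  "graph V E \<longleftrightarrow> (\<forall>x y. E x y \<longrightarrow> x \<in> V \<and> y \<in> V \<and> E y x \<and> x \<noteq> y)"

definition ecard :: "'a set \<Rightarrow> enat" where
  "ecard X = (if finite X then enat (card X) else \<infinity>)"

type_synonym 'a osep = "'a set \<times> 'a set"

definition is_osep :: "'a set \<Rightarrow> ('a \<Rightarrow> 'a \<Rightarrow> bool) \<Rightarrow> 'a osep \<Rightarrow> bool" where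
  "is_osep V E p \<longleftrightarrow> fst p \<union> snd p = V \<and>
     (\<forall>x \<in> fst p - snd p. \<forall>y \<in> snd p - fst p. \<not> E x y)"

definition oinv :: "'a osep \<Rightarrow> 'a osep" where
  "oinv p = (snd p, fst p)"

text \<open>The unordered separation {A,B}, represented as the set of its two orientations.\<close>
definition usep :: "'a osep \<Rightarrow> 'a osep set" where
  "usep p = {p, oinv p}"

definition is_sep :: "'a set \<Rightarrow> ('a \<Rightarrow> 'a \<Rightarrow> bool) \<Rightarrow> 'a osep set \<Rightarrow> bool" where
  "is_sep V E s \<longleftrightarrow> (\<exists>p. s = usep p \<and> is_osep V E p)"

definition oord :: "'a osep \<Rightarrow> enat" where
  "oord p = ecard (fst p \<inter> snd p)"

text \<open>Order of a separation (independent of the chosen orientation).\<close>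
definition sord :: "'a osep set \<Rightarrow> enat" where
  "sord s = oord (SOME p. p \<in> s)"

definition proper_sep :: "'a set \<Rightarrow> ('a \<Rightarrow> 'a \<Rightarrow> bool) \<Rightarrow> 'a osep set \<Rightarrow> bool" where
  "proper_sep V E s \<longleftrightarrow> is_sep V E s \<and> (\<forall>p\<in>s. fst p \<noteq> V \<and> snd p \<noteq> V)"

definition oleq :: "'a osep \<Rightarrow> 'a osep \<Rightarrow> bool" where
  "oleq p q \<longleftrightarrow> fst p \<subseteq> fst q \<and> snd q \<subseteq> snd p"

definition olt :: "'a osep \<Rightarrow> 'a osep \<Rightarrow> bool" where
  "olt p q \<longleftrightarrow> oleq p q \<and> p \<noteq> q"

definition nested :: "'a osep set \<Rightarrow> 'a osep set \<Rightarrow> bool" where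
  "nested s t \<longleftrightarrow> (\<exists>p\<in>s. \<exists>q\<in>t. oleq p q \<or> oleq q p)"

definition consistent :: "'a osep set \<Rightarrow> bool" where
  "consistent X \<longleftrightarrow> \<not> (\<exists>p\<in>X. \<exists>q\<in>X. usep p \<noteq> usep q \<and> oleq (oinv p) q)"

definition pretangle :: "'a set \<Rightarrow> ('a \<Rightarrow> 'a \<Rightarrow> bool) \<Rightarrow> 'a osep set \<Rightarrow> bool" where
  "pretangle V E P \<longleftrightarrow> consistent P \<and>
     (\<exists>k::enat.
        (\<forall>s. is_sep V E s \<and> sord s < k \<longrightarrow> (\<exists>!p. p \<in> s \<inter> P)) \<and>
        (\<forall>p\<in>P. is_sep V E (usep p) \<and> oord p < k))"

definition distinguishes :: "'a osep set \<Rightarrow> 'a osep set \<Rightarrow> 'a osep set \<Rightarrow> bool" where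
  "distinguishes s P Q \<longleftrightarrow> (\<exists>p q. p \<in> s \<inter> P \<and> q \<in> s \<inter> Q \<and> p \<noteq> q)"

definition eff_distinguishes ::
  "'a set \<Rightarrow> ('a \<Rightarrow> 'a \<Rightarrow> bool) \<Rightarrow> 'a osep set \<Rightarrow> 'a osep set \<Rightarrow> 'a osep set \<Rightarrow> bool" where
  "eff_distinguishes V E s P Q \<longleftrightarrow> is_sep V E s \<and> distinguishes s P Q \<and>
     (\<forall>t. is_sep V E t \<and> distinguishes t P Q \<longrightarrow> sord s \<le> sord t)"

definition set_eff_distinguishes ::
  "'a set \<Rightarrow> ('a \<Rightarrow> 'a \<Rightarrow> bool) \<Rightarrow> 'a osep set set \<Rightarrow> 'a osep set set \<Rightarrow> bool" where
  "set_eff_distinguishes V E N \<P> \<longleftrightarrow> (\<forall>P\<in>\<P>. \<forall>Q\<in>\<P>.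
     (\<exists>s. is_sep V E s \<and> distinguishes s P Q) \<longrightarrow> (\<exists>s\<in>N. eff_distinguishes V E s P Q))"

definition relevant ::
  "'a set \<Rightarrow> ('a \<Rightarrow> 'a \<Rightarrow> bool) \<Rightarrow> 'a osep set set \<Rightarrow> 'a osep set \<Rightarrow> bool" where
  "relevant V E \<P> s \<longleftrightarrow> (\<exists>P\<in>\<P>. \<exists>Q\<in>\<P>. eff_distinguishes V E s P Q)"

definition strongly_relevant ::
  "'a set \<Rightarrow> ('a \<Rightarrow> 'a \<Rightarrow> bool) \<Rightarrow> 'a osep set set \<Rightarrow> 'a osep \<Rightarrow> 'a osep \<Rightarrow> bool" where
  "strongly_relevant V E \<P> p q \<longleftrightarrow> olt p q \<and> (\<exists>R\<in>\<P>. \<exists>P\<in>\<P>. \<exists>Q\<in>\<P>.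
     eff_distinguishes V E (usep p) R P \<and> p \<in> P \<and>
     eff_distinguishes V E (usep q) P Q \<and> oinv q \<in> P)"

end

theory Submission imports Defs begin

text \<open>Consider consecutive \<open>a < b\<close> of the sequence, \<open>|a| < |b|\<close>. Choose pre-tangles \<open>P \<ni> oinv b\<close> and
  \<open>Q \<ni> b\<close> efficiently distinguished by \<open>b\<close>; both contain \<open>a\<close>, by consistency and efficiency. Choose
  \<open>R \<ni> oinv a\<close> and \<open>Q' \<ni> a\<close> efficiently distinguished by \<open>a\<close>. If \<open>a\<close> also efficiently distinguishes \<open>R\<close>
  and \<open>P\<close>, then \<open>(a, b)\<close> is strongly relevant. Otherwise the separation of \<open>N\<close> that does has
  smaller order than \<open>a\<close>; nestedness together with the orientations in \<open>P, Q, R, Q'\<close> puts an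
  orientation \<open>c\<close> of it strictly between \<open>a\<close> and \<open>b\<close>, and \<open>(a, c)\<close>, \<open>(c, b)\<close> are strongly
  relevant. Inserting these \<open>c\<close> into the sequence gives the required one.\<close>

lemma oinv_oinv [simp]: "oinv (oinv p) = p"
  by (simp add: oinv_def)

lemma usep_oinv [simp]: "usep (oinv p) = usep p"
  by (auto simp: usep_def)

lemma oord_oinv [simp]: "oord (oinv p) = oord p"
  by (simp add: oord_def oinv_def Int_commute)

lemma in_usep_iff: "q \<in> usep p \<longleftrightarrow> q = p \<or> q = oinv p"
  by (auto simp: usep_def)

lemma self_in_usep [simp]: "p \<in> usep p"
  by (simp add: usep_def)

lemma sord_usep [simp]: "sord (usep p) = oord p"
proof -
  have "(SOME q. q \<in> usep p) \<in> usep p"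
    by (rule someI[of _ p]) simp
  then show ?thesis
    unfolding sord_def by (auto simp: in_usep_iff)
qed

lemma oord_eq_if_usep_eq: "usep p = usep q \<Longrightarrow> oord p = oord q"
  by (metis in_usep_iff oord_oinv self_in_usep)

lemma is_sep_eq_usep: "is_sep V E t \<Longrightarrow> p \<in> t \<Longrightarrow> t = usep p"
  unfolding is_sep_def by (auto simp: in_usep_iff)

lemma usep_in_if_in_Union:
  assumes "\<forall>t\<in>N. is_sep V E t" and "p \<in> \<Union>N"
  shows "usep p \<in> N"
  using assms is_sep_eq_usep by fastforce

lemma is_sep_usep_covers: "is_sep V E (usep p) \<Longrightarrow> fst p \<union> snd p = V"
  unfolding is_sep_def is_osep_def
  by (metis in_usep_iff fst_conv oinv_def self_in_usep snd_conv sup_commute)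

lemma distinguishes_sym: "distinguishes t P Q \<Longrightarrow> distinguishes t Q P"
  unfolding distinguishes_def by blast

lemma eff_distinguishes_sym: "eff_distinguishes V E t P Q \<Longrightarrow> eff_distinguishes V E t Q P"
  unfolding eff_distinguishes_def using distinguishes_sym by blast

lemma distinguishes_usepI:
  "p \<in> P \<Longrightarrow> oinv p \<in> Q \<Longrightarrow> p \<noteq> oinv p \<Longrightarrow> distinguishes (usep p) P Q"
  unfolding distinguishes_def by (metis IntI in_usep_iff)

lemma distinguishes_usepE:
  assumes "is_sep V E t" and "distinguishes t P Q"
  obtains p where "t = usep p" "oinv p \<in> P" "p \<in> Q" "p \<noteq> oinv p"
proof -
  from assms(2) obtain p q where "p \<in> t \<inter> P" "q \<in> t \<inter> Q" "p \<noteq> q"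
    unfolding distinguishes_def by blast
  moreover from this have "t = usep q"
    using is_sep_eq_usep[OF assms(1)] by blast
  ultimately show thesis
    using that[of q] by (auto simp: in_usep_iff)
qed

lemma eff_distinguishes_usepE:
  assumes "eff_distinguishes V E (usep p) P Q"
  obtains "oinv p \<in> P" "p \<in> Q" "p \<noteq> oinv p"
        | "p \<in> P" "oinv p \<in> Q" "p \<noteq> oinv p"
  using assms unfolding eff_distinguishes_def
  by (metis distinguishes_usepE in_usep_iff oinv_oinv self_in_usep)

lemma eff_distinguishes_le:
  "eff_distinguishes V E t P Q \<Longrightarrow> is_sep V E u \<Longrightarrow> distinguishes u P Q \<Longrightarrow> sord t \<le> sord u"
  unfolding eff_distinguishes_def by blast

lemma relevant_usepE:
  assumes "relevant V E \<P> (usep p)"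
  obtains P Q where "P \<in> \<P>" "Q \<in> \<P>" "eff_distinguishes V E (usep p) P Q"
    "oinv p \<in> P" "p \<in> Q" "p \<noteq> oinv p"
  using assms unfolding relevant_def
  by (metis eff_distinguishes_sym eff_distinguishes_usepE)

lemma pretangle_orients:
  assumes "pretangle V E P" "q \<in> P" "is_sep V E t" "sord t < oord q"
  obtains p where "p \<in> t" "p \<in> P"
proof -
  from assms(1) obtain k where
    k: "\<forall>s. is_sep V E s \<and> sord s < k \<longrightarrow> (\<exists>!p. p \<in> s \<inter> P)" "\<forall>p\<in>P. oord p < k"
    unfolding pretangle_def by blast
  have "sord t < k"
    using assms(2,4) k(2) order.strict_trans by blast
  then show thesis
    using k(1) assms(3) that by blast
qed

lemma pretangle_not_oinv_oleq:
  "pretangle V E P \<Longrightarrow> p \<in> P \<Longrightarrow> q \<in> P \<Longrightarrow> oord p \<noteq> oord q \<Longrightarrow> \<not> oleq (oinv p) q"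
proof -
  assume "pretangle V E P" "p \<in> P" "q \<in> P" "oord p \<noteq> oord q"
  then have "consistent P" "usep p \<noteq> usep q"
    using oord_eq_if_usep_eq unfolding pretangle_def by blast+
  with \<open>p \<in> P\<close> \<open>q \<in> P\<close> show ?thesis
    unfolding consistent_def by blast
qed

lemma pretangle_down_closed:
  assumes "pretangle V E P" "q \<in> P" "oleq p q" "oord p < oord q" "is_sep V E (usep p)"
  shows "p \<in> P"
proof -
  obtain p' where "p' \<in> usep p" "p' \<in> P"
    using pretangle_orients[OF assms(1,2,5)] assms(4) by auto
  moreover have "oinv p \<notin> P"
    using pretangle_not_oinv_oleq[OF assms(1) _ assms(2), of "oinv p"] assms(3,4) by force
  ultimately show ?thesis
    by (auto simp: in_usep_iff)
qed

lemma eff_distinguishes_agree_below: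
  assumes "pretangle V E Q" "eff_distinguishes V E t P Q" "p \<in> P"
    "is_sep V E (usep p)" "oord p < sord t"
  shows "p \<in> Q"
proof (rule ccontr)
  assume "p \<notin> Q"
  obtain q where "q \<in> t" "q \<in> Q"
    using assms(2) unfolding eff_distinguishes_def distinguishes_def by blast
  moreover have "sord t = oord q"
    using assms(2) \<open>q \<in> t\<close> is_sep_eq_usep unfolding eff_distinguishes_def by fastforce
  with assms(5) have "sord (usep p) < oord q"
    by simp
  with \<open>q \<in> Q\<close> obtain p' where "p' \<in> usep p" "p' \<in> Q"
    using pretangle_orients[OF assms(1) _ assms(4)] by blast
  with \<open>p \<notin> Q\<close> have "oinv p \<in> Q" "p \<noteq> oinv p"
    by (auto simp: in_usep_iff)
  then have "sord t \<le> oord p"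
    using eff_distinguishes_le[OF assms(2,4)] distinguishes_usepI[OF assms(3)] by simp
  with assms(5) show False
    by simp
qed

lemma eff_distinguishes_triangle:
  assumes "pretangle V E T" "eff_distinguishes V E u T P" "eff_distinguishes V E v T Q"
    "sord u \<le> sord v" "is_sep V E t" "distinguishes t Q P" "sord t \<le> sord u"
  shows "eff_distinguishes V E t Q P"
  unfolding eff_distinguishes_def
proof (intro conjI allI impI assms(5,6))
  fix w
  assume w: "is_sep V E w \<and> distinguishes w Q P"
  show "sord t \<le> sord w"
  proof (rule ccontr)
    assume "\<not> sord t \<le> sord w"
    with assms(7) have "sord w < sord u"
      by simp
    obtain o' where "o' \<in> u" "o' \<in> T"
      using assms(2) unfolding eff_distinguishes_def distinguishes_def by blast
    moreover have "sord u = oord o'"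
      using assms(2) \<open>o' \<in> u\<close> is_sep_eq_usep unfolding eff_distinguishes_def by fastforce
    with \<open>sord w < sord u\<close> have "sord w < oord o'"
      by simp
    with \<open>o' \<in> T\<close> obtain z where z: "z \<in> w" "z \<in> T"
      using pretangle_orients[OF assms(1)] w by blast
    have "\<not> distinguishes w T P"
      using eff_distinguishes_le[OF assms(2)] w \<open>sord w < sord u\<close> by fastforce
    moreover have "\<not> distinguishes w T Q"
      using eff_distinguishes_le[OF assms(3)] w \<open>sord w < sord u\<close> assms(4) by fastforce
    ultimately show False
      using w z unfolding distinguishes_def by blast
  qed
qed

lemma oleq_trans: "oleq p q \<Longrightarrow> oleq q r \<Longrightarrow> oleq p r"
  unfolding oleq_def by blast

lemma nested_usep_cases:
  "nested (usep p) (usep q) \<Longrightarrow> oleq p q \<or> oleq (oinv p) q \<or> oleq p (oinv q) \<or> oleq q p"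
  unfolding nested_def usep_def by (auto simp: oleq_def oinv_def)

lemma proper_not_below_both_orientations:
  assumes "proper_sep V E (usep p)" "is_sep V E (usep q)" "oleq p q"
  shows "\<not> oleq p (oinv q)"
proof
  assume "oleq p (oinv q)"
  with assms(3) have "fst q \<union> snd q \<subseteq> snd p"
    unfolding oleq_def oinv_def by auto
  moreover have "snd p \<subseteq> V" "snd p \<noteq> V"
    using assms(1) is_sep_usep_covers unfolding proper_sep_def by fastforce+
  ultimately show False
    using is_sep_usep_covers[OF assms(2)] by blast
qed

lemma nested_oleq_by_profiles:
  assumes "nested (usep p) (usep q)" "oord p \<noteq> oord q"
    and "pretangle V E X" "p \<in> X" "q \<in> X"
    and "pretangle V E Y" "oinv p \<in> Y" "oinv q \<in> Y"
    and "pretangle V E Z" "p \<in> Z" "oinv q \<in> Z"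
  shows "oleq p q"
proof -
  have "\<not> oleq (oinv p) q" "\<not> oleq p (oinv q)" "\<not> oleq q p"
    using pretangle_not_oinv_oleq[OF assms(3-5)] pretangle_not_oinv_oleq[OF assms(6-8)]
      pretangle_not_oinv_oleq[OF assms(9,11,10)] assms(2) by simp_all
  with assms(1) show ?thesis
    using nested_usep_cases by blast
qed

context
  fixes V :: "'a set" and E :: "'a \<Rightarrow> 'a \<Rightarrow> bool"
    and \<P> :: "'a osep set set" and N :: "'a osep set set"
  assumes pretangles: "\<forall>P\<in>\<P>. pretangle V E P"
    and N_proper_relevant: "\<forall>t\<in>N. proper_sep V E t \<and> relevant V E \<P> t"
    and N_nested: "\<forall>t\<in>N. \<forall>u\<in>N. nested t u"
    and N_eff: "set_eff_distinguishes V E N \<P>"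
begin

lemma N_is_sep: "t \<in> N \<Longrightarrow> is_sep V E t"
  using N_proper_relevant unfolding proper_sep_def by blast

lemma cheaper_distinguisher_in_N:
  assumes aN: "usep a \<in> N" and "R \<in> \<P>" "P \<in> \<P>" "oinv a \<in> R" "a \<in> P" "a \<noteq> oinv a"
    and not_eff: "\<not> eff_distinguishes V E (usep a) R P"
  obtains c where "usep c \<in> N" "eff_distinguishes V E (usep c) R P"
    "oinv c \<in> R" "c \<in> P" "c \<noteq> oinv c" "oord c < oord a"
proof -
  have sa: "is_sep V E (usep a)"
    using N_is_sep aN by blast
  have dist: "distinguishes (usep a) R P"
    using distinguishes_usepI[of "oinv a" R P] assms(4-6) by auto
  then obtain r where r: "r \<in> N" "eff_distinguishes V E r R P"
    using N_eff assms(2,3) sa unfolding set_eff_distinguishes_def by blast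
  then obtain c where c: "r = usep c" "oinv c \<in> R" "c \<in> P" "c \<noteq> oinv c"
    using distinguishes_usepE unfolding eff_distinguishes_def by metis
  have "oord c \<le> oord a"
    using eff_distinguishes_le[OF r(2) sa dist] c by simp
  moreover have "oord c \<noteq> oord a"
    using not_eff r(2) sa dist c unfolding eff_distinguishes_def by auto
  ultimately show thesis
    using that r c by simp
qed

lemma strongly_relevant_interpolant:
  assumes aN: "usep a \<in> N" and bN: "usep b \<in> N" and ab: "oleq a b" and ord_ab: "oord a < oord b"
    and PQ: "P \<in> \<P>" "Q \<in> \<P>" "eff_distinguishes V E (usep b) P Q" "oinv b \<in> P" "b \<in> Q"
    and aP: "a \<in> P"
    and RQ: "R \<in> \<P>" "Q' \<in> \<P>" "eff_distinguishes V E (usep a) R Q'" "oinv a \<in> R" "a \<in> Q'"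
      "a \<noteq> oinv a"
    and not_eff: "\<not> eff_distinguishes V E (usep a) R P"
  obtains c where "c \<in> \<Union>N" "strongly_relevant V E \<P> a c" "strongly_relevant V E \<P> c b"
proof -
  have pre: "pretangle V E P" "pretangle V E Q" "pretangle V E R" "pretangle V E Q'"
    using pretangles PQ RQ by auto
  obtain c where c: "usep c \<in> N" "eff_distinguishes V E (usep c) R P"
    "oinv c \<in> R" "c \<in> P" "c \<noteq> oinv c" and ca: "oord c < oord a"
    using cheaper_distinguisher_in_N[OF aN RQ(1) PQ(1) RQ(4) aP RQ(6) not_eff] .
  have sc: "is_sep V E (usep c)"
    using N_is_sep c(1) by blast
  have cQ': "oinv c \<in> Q'"
    using eff_distinguishes_agree_below[OF pre(4) RQ(3) c(3)] sc ca by simp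
  have cQ: "c \<in> Q"
    using eff_distinguishes_agree_below[OF pre(2) PQ(3) c(4) sc] ca ord_ab by simp
  have ac: "oleq a c"
    using nested_oleq_by_profiles[OF _ _ pre(1) aP c(4) pre(3) RQ(4) c(3) pre(4) RQ(5) cQ']
      N_nested aN c(1) ca by simp
  have "nested (usep c) (usep b)"
    using N_nested bN c(1) by blast
  moreover have "\<not> oleq (oinv c) b" "\<not> oleq b c"
    using pretangle_not_oinv_oleq[OF pre(2) cQ PQ(5)] pretangle_not_oinv_oleq[OF pre(1) PQ(4) c(4)]
      ca ord_ab by simp_all
  moreover have "\<not> oleq c (oinv b)"
    using proper_not_below_both_orientations[OF _ _ ab] oleq_trans[OF ac]
      N_proper_relevant N_is_sep aN bN by blast
  ultimately have cb: "oleq c b"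
    using nested_usep_cases by blast
  have "distinguishes (usep c) Q' P"
    using distinguishes_usepI[of "oinv c" Q' P] cQ' c(4,5) by auto
  then have "eff_distinguishes V E (usep c) Q' P"
    using eff_distinguishes_triangle[OF pre(3) c(2) RQ(3) _ sc] ca by simp
  then have "strongly_relevant V E \<P> a c"
    unfolding strongly_relevant_def olt_def using ac ca RQ PQ(1) cQ' by auto
  moreover have "strongly_relevant V E \<P> c b"
    unfolding strongly_relevant_def olt_def using cb ca ord_ab RQ(1) PQ c by auto
  moreover have "c \<in> \<Union>N"
    using c(1) self_in_usep by blast
  ultimately show thesis
    using that by blast
qed

lemma strongly_relevant_or_interpolant:
  assumes "a \<in> \<Union>N" "b \<in> \<Union>N" "olt a b" "oord a < oord b"
  shows "strongly_relevant V E \<P> a b \<or>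
    (\<exists>c\<in>\<Union>N. strongly_relevant V E \<P> a c \<and> strongly_relevant V E \<P> c b)"
proof -
  have aN: "usep a \<in> N" and bN: "usep b \<in> N"
    using usep_in_if_in_Union N_is_sep assms(1,2) by blast+
  have sa: "is_sep V E (usep a)"
    using N_is_sep aN by blast
  have ab: "oleq a b"
    using \<open>olt a b\<close> unfolding olt_def by auto
  obtain P Q where PQ: "P \<in> \<P>" "Q \<in> \<P>" "eff_distinguishes V E (usep b) P Q" "oinv b \<in> P" "b \<in> Q"
    using relevant_usepE N_proper_relevant bN by metis
  have preP: "pretangle V E P" and preQ: "pretangle V E Q"
    using pretangles PQ by auto
  have aQ: "a \<in> Q"
    using pretangle_down_closed[OF preQ PQ(5) ab \<open>oord a < oord b\<close> sa] .
  have aP: "a \<in> P"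
    using eff_distinguishes_agree_below[OF preP eff_distinguishes_sym[OF PQ(3)] aQ sa]
      \<open>oord a < oord b\<close> by simp
  obtain R Q' where RQ: "R \<in> \<P>" "Q' \<in> \<P>" "eff_distinguishes V E (usep a) R Q'"
    "oinv a \<in> R" "a \<in> Q'" "a \<noteq> oinv a"
    using relevant_usepE N_proper_relevant aN by metis
  show ?thesis
  proof (cases "eff_distinguishes V E (usep a) R P")
    case True
    then have "strongly_relevant V E \<P> a b"
      unfolding strongly_relevant_def using \<open>olt a b\<close> RQ(1) PQ aP by blast
    then show ?thesis ..
  next
    case False
    from strongly_relevant_interpolant[OF aN bN ab \<open>oord a < oord b\<close> PQ aP RQ False]
    show ?thesis
      by blast
  qed
qed

end

lemma refine_to_chain:
  fixes s :: "nat \<Rightarrow> 'b" and R :: "'b \<Rightarrow> 'b \<Rightarrow> bool"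
  assumes "\<And>i. R (s i) (s (Suc i)) \<or> (\<exists>x. R (s i) x \<and> R x (s (Suc i)))"
  obtains s' :: "nat \<Rightarrow> 'b" and f where
    "strict_mono f" "\<And>i. s' (f i) = s i" "\<And>n. R (s' n) (s' (Suc n))"
proof -
  define direct where "direct i \<longleftrightarrow> R (s i) (s (Suc i))" for i
  have "\<forall>i. \<exists>x. \<not> direct i \<longrightarrow> R (s i) x \<and> R x (s (Suc i))"
    using assms unfolding direct_def by blast
  then obtain m where m: "\<And>i. \<not> direct i \<Longrightarrow> R (s i) (m i) \<and> R (m i) (s (Suc i))"
    by metis
  \<comment> \<open>A position \<open>(i, True)\<close> of the refined sequence holds \<open>m i\<close>, a position \<open>(i, False)\<close> holds \<open>s i\<close>.\<close>
  define step where
    "step = (\<lambda>(i, mid). if mid \<or> direct i then (Suc i, False) else (i, True))"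
  define pos where "pos n = (step ^^ n) (0, False)" for n
  define s' where "s' n = (case pos n of (i, mid) \<Rightarrow> if mid then m i else s i)" for n
  define f where "f i = (\<Sum>j<i. if direct j then 1 else 2 :: nat)" for i
  have pos_Suc: "pos (Suc n) = step (pos n)" for n
    unfolding pos_def by simp
  have mid_indirect: "\<not> direct i" if "pos n = (i, True)" for n i
    using that
  proof (induction n arbitrary: i)
    case 0
    then show ?case
      by (simp add: pos_def)
  next
    case (Suc n)
    then show ?case
      unfolding pos_Suc step_def by (cases "pos n") (auto split: if_splits)
  qed
  have pos_f: "pos (f i) = (i, False)" for i
  proof (induction i)
    case 0
    then show ?case
      by (simp add: pos_def f_def)
  next
    case (Suc i)
    then show ?case
      by (cases "direct i") (simp_all add: f_def pos_Suc step_def)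
  qed
  have "strict_mono f"
    unfolding strict_mono_Suc_iff f_def by simp
  moreover have "s' (f i) = s i" for i
    unfolding s'_def pos_f by simp
  moreover have "R (s' n) (s' (Suc n))" for n
  proof (cases "pos n")
    case (Pair i mid)
    then show ?thesis
      using m[of i] mid_indirect[of n i]
      unfolding s'_def pos_Suc step_def direct_def by (cases mid) auto
  qed
  ultimately show thesis
    using that by blast
qed

theorem mainTheorem15:
  fixes V :: "'a set" and E :: "'a \<Rightarrow> 'a \<Rightarrow> bool"
    and \<P> :: "'a osep set set" and N :: "'a osep set set"
    and s :: "nat \<Rightarrow> 'a osep"
  assumes "graph V E"
    and "\<forall>P\<in>\<P>. pretangle V E P"
    and "\<forall>t\<in>N. proper_sep V E t \<and> relevant V E \<P> t"
    and "\<forall>t\<in>N. \<forall>u\<in>N. nested t u"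
    and "set_eff_distinguishes V E N \<P>"
    and "\<forall>i. s i \<in> \<Union>N"
    and "\<forall>i. olt (s i) (s (Suc i))"
    and "\<forall>i. oord (s i) < oord (s (Suc i))"
  shows "\<exists>s' :: nat \<Rightarrow> 'a osep. (\<forall>i. s' i \<in> \<Union>N) \<and> (\<forall>i. olt (s' i) (s' (Suc i))) \<and>
           (\<exists>f. strict_mono f \<and> (\<forall>i. s' (f i) = s i)) \<and>
           (\<forall>i. strongly_relevant V E \<P> (s' i) (s' (Suc i)))"
proof -
  define R where "R p q \<longleftrightarrow> p \<in> \<Union>N \<and> q \<in> \<Union>N \<and> strongly_relevant V E \<P> p q" for p q
  have "R (s i) (s (Suc i)) \<or> (\<exists>x. R (s i) x \<and> R x (s (Suc i)))" for i
    using strongly_relevant_or_interpolant[OF assms(2-5), of "s i" "s (Suc i)"] assms(6-8)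
    unfolding R_def by blast
  then obtain s' f where "strict_mono f" "\<And>i. s' (f i) = s i" "\<And>n. R (s' n) (s' (Suc n))"
    using refine_to_chain by metis
  then show ?thesis
    unfolding R_def strongly_relevant_def by blast
qed

end
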